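(* (a) For every real $\alpha<0$: $\mu_{1,m}(\alpha)$ is strictly increasing in $m\ge2$; $\mu_{5,m}(\alpha)$ is strictly increasing in $m\ge3$; and for every $m\ge2$, \[ \mu_{1,m}(\alpha)<\mu_2(\alpha)<\mu_3(\alpha)<\mu_4(\alpha)<\mu_{5,3}(\alpha). \] (b) For every real $\alpha\in(0,\tfrac12)$, all the inequalities and monotonicities in (a) hold with the order reversed (i.e. $\mu_{1,m}(\alpha)$ and $\mu_{5,m}(\alpha)$ are strictly decreasing in $m$ and $\mu_{1,m}(\alpha)>\mu_2(\alpha)>\mu_3(\alpha)>\mu_4(\alpha)>\mu_{5,3}(\alpha)$), and the same reversed statements hold with $\mu(\alpha)$ replaced by $\mu'$.
   Context: Consider Galton–Watson trees with offspring distributions: $\xi_{1,m}\sim\mathrm{Bin}(m,1/m)$ ($m\ge2$); $\xi_2\sim\mathrm{Po}(1)$; $\xi_3\sim 2\,\mathrm{Bin}(1,1/2)$; $\xi_4\sim\mathrm{Ge}(1/2)$, i.e. $\mathbb P(\xi_4=k)=2^{-k-1}$, $k\ge0$; $\xi_{5,m}\sim m\,\mathrm{Bin}(1,1/m)$ ($m\ge3$). For a Galton–Watson tree $\mathcal T$ with the indicated offspring distribution (indexed by the same subscript), $\mu(\alpha):=\mathbb E|\mathcal T|^\alpha$ for real $\alpha<1/2$ and $\mu':=\mathbb E\log|\mathcal T|$, where $|\mathcal T|$ is the number of vertices. *)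

theory Defs
  imports "HOL-Probability.Probability"
begin

datatype ptree = Node "ptree list"

fun tsize :: "ptree \<Rightarrow> nat" where
  "tsize (Node ts) = 1 + sum_list (map tsize ts)"

fun gw_tree_prob :: "nat pmf \<Rightarrow> ptree \<Rightarrow> real" where
  "gw_tree_prob \<xi> (Node ts) = pmf \<xi> (length ts) * prod_list (map (gw_tree_prob \<xi>) ts)"

definition gw_size_prob :: "nat pmf \<Rightarrow> nat \<Rightarrow> real" where
  "gw_size_prob \<xi> n = (\<Sum>t\<in>{t. tsize t = n}. gw_tree_prob \<xi> t)"

definition gw_mu :: "nat pmf \<Rightarrow> real \<Rightarrow> real" where
  "gw_mu \<xi> \<alpha> = (\<Sum>n. gw_size_prob \<xi> n * real n powr \<alpha>)"

definition gw_mu_log :: "nat pmf \<Rightarrow> real" where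
  "gw_mu_log \<xi> = (\<Sum>n. gw_size_prob \<xi> n * ln (real n))"

definition xi1 :: "nat \<Rightarrow> nat pmf" where
  "xi1 m = binomial_pmf m (1 / real m)"

definition xi2 :: "nat pmf" where
  "xi2 = poisson_pmf 1"

definition xi3 :: "nat pmf" where
  "xi3 = map_pmf (\<lambda>b. if b then 2 else 0) (bernoulli_pmf (1/2))"

definition xi4 :: "nat pmf" where
  "xi4 = geometric_pmf (1/2)"

definition xi5 :: "nat \<Rightarrow> nat pmf" where
  "xi5 m = map_pmf (\<lambda>b. if b then m else 0) (bernoulli_pmf (1 / real m))"

end

theory Submission
  imports Defs
begin

text \<open>Let \<open>Y(z) = E z\<^bsup>|T|\<^esup>\<close> be the size generating function and \<open>\<phi>\<close> the offspring
  generating function, so that \<open>Y = z \<phi>(Y)\<close>. Since \<open>\<phi>\<close> is convex with \<open>\<phi>(1) = 1\<close>, a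
  pointwise inequality \<open>\<phi>\<^sub>A < \<phi>\<^sub>B\<close> on \<open>(0, 1)\<close> forces \<open>Y\<^sub>A < Y\<^sub>B\<close> there, and for the
  listed laws these inequalities between explicit generating functions are elementary.
  The moments are Mellin transforms of \<open>Y\<close>: for \<open>\<alpha> < 0\<close>,
  \<open>\<Gamma>(-\<alpha>) E|T|\<^sup>\<alpha> = \<integral>\<^sub>0\<^sup>\<infinity> t\<^bsup>-\<alpha>-1\<^esup> Y(e\<^sup>-\<^sup>t) dt\<close>, which preserves the order; for
  \<open>0 \<le> \<alpha> < 1/2\<close>, writing \<open>|T|\<^sup>\<alpha> = 1 + \<alpha> \<integral>\<^sub>1\<^bsup>|T|\<^esup> s\<^bsup>\<alpha>-1\<^esup> ds\<close> (and \<open>log |T| = \<integral>\<^sub>1\<^bsup>|T|\<^esup> s\<^sup>-\<^sup>1 ds\<close>),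
  \<open>\<Gamma>(1-\<alpha>) E \<integral>\<^sub>1\<^bsup>|T|\<^esup> s\<^bsup>\<alpha>-1\<^esup> ds = \<integral>\<^sub>0\<^sup>\<infinity> t\<^bsup>-\<alpha>-1\<^esup> (e\<^sup>-\<^sup>t - Y(e\<^sup>-\<^sup>t)) dt\<close>, which reverses
  it. The last integral converges because every law considered dominates the critical
  binary law, for which \<open>1 - Y(z) = O(\<surd>(1 - z))\<close>.\<close>

lemma tsize_pos: "1 \<le> tsize t"
  by (cases t) simp

lemma tsize_neq_0: "tsize t \<noteq> 0"
  using tsize_pos[of t] by linarith

lemma length_le_sum_tsize: "length ts \<le> sum_list (map tsize ts)"
proof (induction ts)
  case (Cons t ts)
  then show ?case
    using tsize_pos[of t] by simp
qed simp

lemma tsize_le_sum_tsize: "t \<in> set ts \<Longrightarrow> tsize t \<le> sum_list (map tsize ts)"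
  by (induction ts) auto

lemma sum_list_map_le: "(\<And>t. t \<in> set ts \<Longrightarrow> f t \<le> (M::nat)) \<Longrightarrow> sum_list (map f ts) \<le> length ts * M"
  by (induction ts) (auto simp: add_mono)

definition trees_upto :: "nat \<Rightarrow> ptree set" where
  "trees_upto N = {t. tsize t \<le> N}"

lemma trees_upto_Suc_subset:
  "trees_upto (Suc N) \<subseteq> Node ` {ts. set ts \<subseteq> trees_upto N \<and> length ts \<le> N}"
proof
  fix t assume "t \<in> trees_upto (Suc N)"
  then obtain ts where t: "t = Node ts" and le: "sum_list (map tsize ts) \<le> N"
    by (cases t) (auto simp: trees_upto_def)
  have "set ts \<subseteq> trees_upto N"
    using le tsize_le_sum_tsize by (fastforce simp: trees_upto_def)
  moreover have "length ts \<le> N"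
    using le length_le_sum_tsize le_trans by blast
  ultimately show "t \<in> Node ` {ts. set ts \<subseteq> trees_upto N \<and> length ts \<le> N}"
    using t by auto
qed

lemma Node_subset_trees_upto:
  "Node ` {ts. set ts \<subseteq> trees_upto M \<and> length ts \<le> K} \<subseteq> trees_upto (Suc (K * M))"
proof clarify
  fix ts assume ts: "set ts \<subseteq> trees_upto M" "length ts \<le> K"
  have "sum_list (map tsize ts) \<le> length ts * M"
    using ts(1) by (intro sum_list_map_le) (auto simp: trees_upto_def)
  also have "\<dots> \<le> K * M"
    using ts(2) by simp
  finally show "Node ts \<in> trees_upto (Suc (K * M))"
    by (simp add: trees_upto_def)
qed

lemma finite_trees_upto: "finite (trees_upto N)"
proof (induction N)
  case 0
  have "trees_upto 0 = {}"
    using tsize_neq_0 by (auto simp: trees_upto_def)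
  then show ?case by simp
next
  case (Suc N)
  then have "finite {ts. set ts \<subseteq> trees_upto N \<and> length ts \<le> N}"
    by (rule finite_lists_length_le)
  then show ?case
    using trees_upto_Suc_subset finite_subset by blast
qed

lemma gw_tree_prob_nonneg: "0 \<le> gw_tree_prob \<xi> t"
proof (induction t)
  case (Node ts)
  then show ?case
    by (simp, intro mult_nonneg_nonneg pmf_nonneg prod_list_nonneg) auto
qed

lemma gw_size_prob_nonneg: "0 \<le> gw_size_prob \<xi> n"
  unfolding gw_size_prob_def by (intro sum_nonneg gw_tree_prob_nonneg)

lemma gw_size_prob_0 [simp]: "gw_size_prob \<xi> 0 = 0"
proof -
  have empty: "{t. tsize t = 0} = {}"
    using tsize_neq_0 by auto
  show ?thesis
    unfolding gw_size_prob_def empty by simp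
qed

lemma gw_size_prob_1: "gw_size_prob \<xi> 1 = pmf \<xi> 0"
proof -
  have "{t. tsize t = 1} = {Node []}"
  proof safe
    fix t assume "tsize t = 1"
    then obtain ts where "t = Node ts" "sum_list (map tsize ts) = 0"
      by (cases t) auto
    then show "t = Node []"
      using tsize_neq_0 by (cases ts) auto
  qed simp
  then show ?thesis
    by (simp add: gw_size_prob_def)
qed

lemma sum_lists_prod_list:
  fixes f :: "'a \<Rightarrow> real"
  assumes "finite S"
  shows "(\<Sum>ts\<in>{ts. set ts \<subseteq> S \<and> length ts = k}. prod_list (map f ts)) = sum f S ^ k"
proof (induction k)
  case 0
  have "{ts. set ts \<subseteq> S \<and> length ts = 0} = {[]}" by auto
  then show ?case by simp
next
  case (Suc k)
  let ?A = "{xs. set xs \<subseteq> S \<and> length xs = k}"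
  have inj: "inj_on (\<lambda>(xs, n). n # xs) (?A \<times> S)"
    by (auto simp: inj_on_def)
  have "(\<Sum>ts\<in>(\<lambda>(xs, n). n # xs) ` (?A \<times> S). prod_list (map f ts))
      = (\<Sum>(xs, n)\<in>?A \<times> S. f n * prod_list (map f xs))"
    by (subst sum.reindex[OF inj]) (simp add: case_prod_unfold)
  also have "\<dots> = (\<Sum>xs\<in>?A. \<Sum>n\<in>S. f n * prod_list (map f xs))"
    by (rule sum.cartesian_product[symmetric])
  also have "\<dots> = (\<Sum>xs\<in>?A. prod_list (map f xs)) * sum f S"
    by (simp add: sum_product mult.commute sum.swap[of _ S])
  finally show ?case
    unfolding lists_length_Suc_eq using Suc by (simp add: mult.commute)
qed

lemma prod_list_map_mult_power:
  "prod_list (map (\<lambda>t. f t * (z::real) ^ g t) ts) = prod_list (map f ts) * z ^ sum_list (map g ts)"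
  by (induction ts) (auto simp: power_add algebra_simps)

lemma sum_Node_lists_gw_tree_prob:
  assumes "finite S"
  shows "(\<Sum>ts\<in>{ts. set ts \<subseteq> S \<and> length ts \<le> K}. gw_tree_prob \<xi> (Node ts) * (z::real) ^ tsize (Node ts))
       = z * (\<Sum>k\<le>K. pmf \<xi> k * (\<Sum>t\<in>S. gw_tree_prob \<xi> t * z ^ tsize t) ^ k)"
proof -
  let ?L = "{ts. set ts \<subseteq> S \<and> length ts \<le> K}"
  let ?F = "\<lambda>t. gw_tree_prob \<xi> t * z ^ tsize t"
  have Node: "?F (Node ts) = z * pmf \<xi> (length ts) * prod_list (map ?F ts)" for ts
    by (simp add: prod_list_map_mult_power)
  have "finite ?L"
    using finite_lists_length_le[OF assms] by blast
  then have "(\<Sum>ts\<in>?L. ?F (Node ts)) = (\<Sum>k\<le>K. \<Sum>ts\<in>{ts\<in>?L. length ts = k}. ?F (Node ts))"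
    by (intro sum.group[symmetric]) auto
  also have "\<dots> = (\<Sum>k\<le>K. z * pmf \<xi> k * (\<Sum>ts\<in>{ts. set ts \<subseteq> S \<and> length ts = k}. prod_list (map ?F ts)))"
  proof (rule sum.cong[OF refl])
    fix k assume "k \<in> {..K}"
    then have "{ts\<in>?L. length ts = k} = {ts. set ts \<subseteq> S \<and> length ts = k}" by auto
    then show "(\<Sum>ts\<in>{ts\<in>?L. length ts = k}. ?F (Node ts)) =
      z * pmf \<xi> k * (\<Sum>ts\<in>{ts. set ts \<subseteq> S \<and> length ts = k}. prod_list (map ?F ts))"
      by (simp only: Node sum_distrib_left) (rule sum.cong, auto)
  qed
  also have "\<dots> = z * (\<Sum>k\<le>K. pmf \<xi> k * sum ?F S ^ k)"
    by (simp add: sum_lists_prod_list[OF assms] sum_distrib_left algebra_simps)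
  finally show ?thesis .
qed

subsection \<open>Generating functions\<close>

definition gf :: "(nat \<Rightarrow> real) \<Rightarrow> real \<Rightarrow> real" where
  "gf p z = (\<Sum>n. p n * z ^ n)"

abbreviation pgf :: "nat pmf \<Rightarrow> real \<Rightarrow> real" where
  "pgf \<xi> \<equiv> gf (pmf \<xi>)"

abbreviation size_gf :: "nat pmf \<Rightarrow> real \<Rightarrow> real" where
  "size_gf \<xi> \<equiv> gf (gw_size_prob \<xi>)"

context
  fixes p :: "nat \<Rightarrow> real"
  assumes p_nonneg: "\<And>n. 0 \<le> p n" and p_summable: "summable p"
begin

lemma summable_gf: "\<bar>z\<bar> \<le> 1 \<Longrightarrow> summable (\<lambda>n. p n * z ^ n)"
  by (rule summable_comparison_test[OF _ p_summable])
     (auto intro!: exI[of _ 0] mult_left_le power_le_one simp: abs_mult power_abs p_nonneg)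

lemma sums_gf: "\<bar>z\<bar> \<le> 1 \<Longrightarrow> (\<lambda>n. p n * z ^ n) sums gf p z"
  unfolding gf_def by (rule summable_sums[OF summable_gf])

lemma gf_nonneg: "0 \<le> z \<Longrightarrow> z \<le> 1 \<Longrightarrow> 0 \<le> gf p z"
  unfolding gf_def by (intro suminf_nonneg summable_gf) (auto simp: p_nonneg)

lemma gf_mono: "0 \<le> x \<Longrightarrow> x \<le> y \<Longrightarrow> y \<le> 1 \<Longrightarrow> gf p x \<le> gf p y"
  unfolding gf_def by (rule suminf_le) (auto intro!: summable_gf mult_left_mono power_mono p_nonneg)

lemma gf_le_suminf: "0 \<le> z \<Longrightarrow> z \<le> 1 \<Longrightarrow> gf p z \<le> suminf p"
  using gf_mono[of z 1] by (simp add: gf_def)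

lemma sum_le_gf: "0 \<le> y \<Longrightarrow> y \<le> 1 \<Longrightarrow> (\<Sum>k\<le>K. p k * y ^ k) \<le> gf p y"
  unfolding gf_def atMost_atLeast0 atLeastLessThanSuc_atLeastAtMost[symmetric] atLeast0LessThan
  by (rule sum_le_suminf) (auto intro!: summable_gf mult_nonneg_nonneg p_nonneg)

lemma convex_on_gf: "convex_on {0..1} (gf p)"
proof (rule convex_onI)
  fix t x y :: real assume t: "0 < t" "t < 1" and x: "x \<in> {0..1}" and y: "y \<in> {0..1}"
  have power: "((1 - t) * x + t * y) ^ k \<le> (1 - t) * x ^ k + t * y ^ k" for k
  proof -
    have "convex_on {0..} (\<lambda>x::real. x ^ k)"
      by (cases "even k") (auto intro: convex_power_odd convex_on_subset[OF convex_power_even])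
    from convex_onD[OF this, of t x y] show ?thesis using x y t by simp
  qed
  have sx: "summable (\<lambda>k. p k * x ^ k)" and sy: "summable (\<lambda>k. p k * y ^ k)"
    using x y by (auto intro!: summable_gf)
  have "gf p ((1 - t) * x + t * y) \<le> (\<Sum>k. (1 - t) * (p k * x ^ k) + t * (p k * y ^ k))"
    unfolding gf_def
  proof (rule suminf_le)
    show "p k * ((1 - t) * x + t * y) ^ k \<le> (1 - t) * (p k * x ^ k) + t * (p k * y ^ k)" for k
      using mult_left_mono[OF power p_nonneg, of k] by (simp add: algebra_simps)
  qed (use x y t in \<open>auto intro!: summable_gf summable_add summable_mult sx sy simp: convex_bound_le\<close>)
  also have "\<dots> = (1 - t) * gf p x + t * gf p y"
    unfolding gf_def
    by (subst suminf_add[symmetric]) (auto intro!: summable_mult sx sy simp: suminf_mult[OF sx] suminf_mult[OF sy])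
  finally show "gf p ((1 - t) *\<^sub>R x + t *\<^sub>R y) \<le> (1 - t) * gf p x + t * gf p y"
    by simp
qed (simp add: convex_real_interval)

lemma gf_le_id:
  assumes "p sums 1" "p 0 = 0" "0 \<le> z" "z \<le> 1"
  shows "gf p z \<le> z"
proof -
  have "gf p z \<le> (\<Sum>n. p n * z)"
    unfolding gf_def
  proof (rule suminf_le)
    show "p n * z ^ n \<le> p n * z" for n
      using assms power_decreasing[of 1 n z] by (cases "n = 0") (auto intro!: mult_left_mono p_nonneg)
  qed (use assms in \<open>auto intro!: summable_gf summable_mult2 p_summable\<close>)
  also have "\<dots> = z"
    using sums_mult2[OF assms(1), of z] by (simp add: sums_iff)
  finally show ?thesis .
qed

end

lemma pmf_sums_1: "pmf \<xi> sums 1"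
proof -
  have "(\<Sum>k. ennreal (pmf \<xi> k)) = (\<integral>\<^sup>+k. pmf \<xi> k \<partial>count_space UNIV)"
    by (simp add: nn_integral_count_space_nat)
  also have "\<dots> = 1"
    by (simp add: nn_integral_pmf)
  finally have sum: "(\<Sum>k. ennreal (pmf \<xi> k)) = 1" .
  then have "summable (pmf \<xi>)"
    by (intro summable_suminf_not_top) auto
  with sum show ?thesis
    by (metis ennreal_eq_1 pmf_nonneg suminf_ennreal2 summable_sums)
qed

lemmas pmf_gf_facts = pmf_nonneg sums_summable[OF pmf_sums_1]

lemma pgf_1 [simp]: "pgf \<xi> 1 = 1"
  using pmf_sums_1[of \<xi>] by (simp add: gf_def sums_iff)

lemma pgf_le_1: "0 \<le> y \<Longrightarrow> y \<le> 1 \<Longrightarrow> pgf \<xi> y \<le> 1"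
  using gf_mono[OF pmf_gf_facts, of y 1] by simp

subsection \<open>The functional equation of the size generating function\<close>

definition size_gf_upto :: "nat pmf \<Rightarrow> nat \<Rightarrow> real \<Rightarrow> real" where
  "size_gf_upto \<xi> N z = (\<Sum>t\<in>trees_upto N. gw_tree_prob \<xi> t * z ^ tsize t)"

lemma size_gf_upto_eq: "size_gf_upto \<xi> N z = (\<Sum>n\<le>N. gw_size_prob \<xi> n * z ^ n)"
proof -
  have "size_gf_upto \<xi> N z = (\<Sum>n\<le>N. \<Sum>t\<in>{t\<in>trees_upto N. tsize t = n}. gw_tree_prob \<xi> t * z ^ tsize t)"
    unfolding size_gf_upto_def
    by (rule sum.group[symmetric]) (simp_all add: finite_trees_upto, auto simp: trees_upto_def)
  also have "\<dots> = (\<Sum>n\<le>N. gw_size_prob \<xi> n * z ^ n)"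
  proof (rule sum.cong[OF refl])
    fix n assume "n \<in> {..N}"
    then have "{t\<in>trees_upto N. tsize t = n} = {t. tsize t = n}"
      by (auto simp: trees_upto_def)
    then show "(\<Sum>t\<in>{t\<in>trees_upto N. tsize t = n}. gw_tree_prob \<xi> t * z ^ tsize t) = gw_size_prob \<xi> n * z ^ n"
      by (simp add: gw_size_prob_def sum_distrib_right)
  qed
  finally show ?thesis .
qed

lemma size_gf_upto_nonneg: "0 \<le> z \<Longrightarrow> 0 \<le> size_gf_upto \<xi> N z"
  unfolding size_gf_upto_def by (intro sum_nonneg mult_nonneg_nonneg gw_tree_prob_nonneg) auto

lemma size_gf_upto_Suc_le:
  assumes "0 \<le> z"
  shows "size_gf_upto \<xi> (Suc N) z \<le> z * (\<Sum>k\<le>N. pmf \<xi> k * size_gf_upto \<xi> N z ^ k)"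
proof -
  let ?L = "{ts. set ts \<subseteq> trees_upto N \<and> length ts \<le> N}"
  have "finite ?L"
    using finite_lists_length_le[OF finite_trees_upto] by blast
  then have "size_gf_upto \<xi> (Suc N) z \<le> (\<Sum>t\<in>Node ` ?L. gw_tree_prob \<xi> t * z ^ tsize t)"
    unfolding size_gf_upto_def using assms
    by (intro sum_mono2 finite_imageI trees_upto_Suc_subset mult_nonneg_nonneg gw_tree_prob_nonneg) auto
  also have "\<dots> = (\<Sum>ts\<in>?L. gw_tree_prob \<xi> (Node ts) * z ^ tsize (Node ts))"
    by (subst sum.reindex) (auto simp: inj_on_def)
  also have "\<dots> = z * (\<Sum>k\<le>N. pmf \<xi> k * size_gf_upto \<xi> N z ^ k)"
    unfolding size_gf_upto_def by (rule sum_Node_lists_gw_tree_prob[OF finite_trees_upto])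
  finally show ?thesis .
qed

lemma size_gf_upto_ge:
  assumes "0 \<le> z"
  shows "z * (\<Sum>k\<le>K. pmf \<xi> k * size_gf_upto \<xi> M z ^ k) \<le> size_gf_upto \<xi> (Suc (K * M)) z"
proof -
  let ?L = "{ts. set ts \<subseteq> trees_upto M \<and> length ts \<le> K}"
  have "z * (\<Sum>k\<le>K. pmf \<xi> k * size_gf_upto \<xi> M z ^ k)
      = (\<Sum>ts\<in>?L. gw_tree_prob \<xi> (Node ts) * z ^ tsize (Node ts))"
    unfolding size_gf_upto_def by (rule sum_Node_lists_gw_tree_prob[OF finite_trees_upto, symmetric])
  also have "\<dots> = (\<Sum>t\<in>Node ` ?L. gw_tree_prob \<xi> t * z ^ tsize t)"
    by (subst sum.reindex) (auto simp: inj_on_def)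
  also have "\<dots> \<le> size_gf_upto \<xi> (Suc (K * M)) z"
    unfolding size_gf_upto_def using assms
    by (intro sum_mono2 finite_trees_upto Node_subset_trees_upto mult_nonneg_nonneg gw_tree_prob_nonneg) auto
  finally show ?thesis .
qed

lemma size_gf_upto_1_le_1: "size_gf_upto \<xi> N 1 \<le> 1"
proof (induction N)
  case 0
  then show ?case by (simp add: size_gf_upto_eq)
next
  case (Suc N)
  have "size_gf_upto \<xi> (Suc N) 1 \<le> (\<Sum>k\<le>N. pmf \<xi> k * size_gf_upto \<xi> N 1 ^ k)"
    using size_gf_upto_Suc_le[of 1 \<xi> N] by simp
  also have "\<dots> \<le> (\<Sum>k\<le>N. pmf \<xi> k * 1 ^ k)"
    using Suc size_gf_upto_nonneg[of 1 \<xi> N] by (intro sum_mono mult_left_mono power_mono) auto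
  also have "\<dots> \<le> pgf \<xi> 1"
    by (rule sum_le_gf[OF pmf_gf_facts]) auto
  finally show ?case by simp
qed

lemma summable_gw_size_prob: "summable (gw_size_prob \<xi>)"
  and suminf_gw_size_prob_le_1: "(\<Sum>n. gw_size_prob \<xi> n) \<le> 1"
proof -
  have partial: "sum (gw_size_prob \<xi>) {..<n} \<le> 1" for n
    using size_gf_upto_1_le_1[of \<xi> "n - 1"]
    by (cases n) (auto simp: size_gf_upto_eq lessThan_Suc_atMost)
  show "summable (gw_size_prob \<xi>)"
    by (rule summableI_nonneg_bounded[OF gw_size_prob_nonneg partial])
  then show "(\<Sum>n. gw_size_prob \<xi> n) \<le> 1"
    by (rule suminf_le_const[OF _ partial])
qed

lemmas size_gf_facts = gw_size_prob_nonneg summable_gw_size_prob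

lemma size_gf_le_1: "0 \<le> z \<Longrightarrow> z \<le> 1 \<Longrightarrow> size_gf \<xi> z \<le> 1"
  using gf_le_suminf[OF size_gf_facts] suminf_gw_size_prob_le_1 order_trans by blast

lemma size_gf_upto_le: "0 \<le> z \<Longrightarrow> z \<le> 1 \<Longrightarrow> size_gf_upto \<xi> N z \<le> size_gf \<xi> z"
  unfolding size_gf_upto_eq by (rule sum_le_gf[OF size_gf_facts])

lemma size_gf_upto_tendsto: "\<bar>z\<bar> \<le> 1 \<Longrightarrow> (\<lambda>N. size_gf_upto \<xi> N z) \<longlonglongrightarrow> size_gf \<xi> z"
  using LIMSEQ_Suc[OF sums_gf[OF size_gf_facts, unfolded sums_def]]
  by (simp add: size_gf_upto_eq lessThan_Suc_atMost)

text \<open>Both inequalities go through the truncations: a tree of size \<open>\<le> N + 1\<close> has at most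
  \<open>N\<close> subtrees of size \<open>\<le> N\<close>, and \<open>K\<close> subtrees of size \<open>\<le> M\<close> make a tree of size \<open>\<le> KM + 1\<close>.\<close>

lemma size_gf_le_fixed_point:
  assumes z: "0 \<le> z" "z \<le> 1"
  shows "size_gf \<xi> z \<le> z * pgf \<xi> (size_gf \<xi> z)"
proof -
  let ?Y = "size_gf \<xi> z"
  have Y: "0 \<le> ?Y" "?Y \<le> 1"
    using z by (auto intro: gf_nonneg[OF size_gf_facts] size_gf_le_1)
  have "(\<lambda>N. size_gf_upto \<xi> (Suc N) z) \<longlonglongrightarrow> ?Y"
    using z by (intro LIMSEQ_Suc size_gf_upto_tendsto) auto
  moreover have "size_gf_upto \<xi> (Suc N) z \<le> z * pgf \<xi> ?Y" for N
  proof -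
    have "size_gf_upto \<xi> (Suc N) z \<le> z * (\<Sum>k\<le>N. pmf \<xi> k * size_gf_upto \<xi> N z ^ k)"
    by (rule size_gf_upto_Suc_le[OF z(1)])
  also have "\<dots> \<le> z * (\<Sum>k\<le>N. pmf \<xi> k * ?Y ^ k)"
    using z size_gf_upto_le size_gf_upto_nonneg
    by (intro mult_left_mono sum_mono mult_left_mono power_mono) auto
  also have "\<dots> \<le> z * pgf \<xi> ?Y"
    using z Y by (intro mult_left_mono sum_le_gf[OF pmf_gf_facts]) auto
    finally show ?thesis .
  qed
  ultimately show ?thesis
    by (intro LIMSEQ_le_const2) auto
qed

lemma size_gf_ge_fixed_point:
  assumes z: "0 \<le> z" "z \<le> 1"
  shows "z * pgf \<xi> (size_gf \<xi> z) \<le> size_gf \<xi> z"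
proof -
  let ?Y = "size_gf \<xi> z"
  have Y: "0 \<le> ?Y" "?Y \<le> 1"
    using z by (auto intro: gf_nonneg[OF size_gf_facts] size_gf_le_1)
  have partial: "z * (\<Sum>k\<le>K. pmf \<xi> k * ?Y ^ k) \<le> ?Y" for K
  proof -
    have "(\<lambda>M. z * (\<Sum>k\<le>K. pmf \<xi> k * size_gf_upto \<xi> M z ^ k)) \<longlonglongrightarrow> z * (\<Sum>k\<le>K. pmf \<xi> k * ?Y ^ k)"
      using z by (intro tendsto_intros size_gf_upto_tendsto) auto
    moreover have "z * (\<Sum>k\<le>K. pmf \<xi> k * size_gf_upto \<xi> M z ^ k) \<le> ?Y" for M
      using size_gf_upto_ge[OF z(1), where K=K and M=M and \<xi>=\<xi>] size_gf_upto_le[OF z, of \<xi> "Suc (K * M)"]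
      by linarith
    ultimately show ?thesis
      by (intro LIMSEQ_le_const2) auto
  qed
  have "z * pgf \<xi> ?Y = (\<Sum>k. z * (pmf \<xi> k * ?Y ^ k))"
    unfolding gf_def[of "pmf \<xi>"] using Y by (intro suminf_mult[symmetric] summable_gf[OF pmf_gf_facts]) auto
  also have "\<dots> \<le> ?Y"
  proof (rule suminf_le_const)
    show "summable (\<lambda>k. z * (pmf \<xi> k * ?Y ^ k))"
      using Y by (intro summable_mult summable_gf[OF pmf_gf_facts]) auto
    show "(\<Sum>k<n. z * (pmf \<xi> k * ?Y ^ k)) \<le> ?Y" for n
      using partial[of "n - 1"] Y
      by (cases n) (auto simp: lessThan_Suc_atMost sum_distrib_left)
  qed
  finally show ?thesis .
qed

lemma size_gf_fixed_point:
  "0 \<le> z \<Longrightarrow> z \<le> 1 \<Longrightarrow> size_gf \<xi> z = z * pgf \<xi> (size_gf \<xi> z)"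
  using size_gf_le_fixed_point size_gf_ge_fixed_point by (metis order.antisym)

lemma size_gf_le_id: "0 \<le> z \<Longrightarrow> z \<le> 1 \<Longrightarrow> size_gf \<xi> z \<le> z"
  using size_gf_fixed_point[of z \<xi>] pgf_le_1[of "size_gf \<xi> z" \<xi>]
    gf_nonneg[OF size_gf_facts] size_gf_le_1
  by (metis mult_left_le)

lemma size_gf_pos:
  assumes "0 < pmf \<xi> 0" "0 < z" "z \<le> 1"
  shows "0 < size_gf \<xi> z"
proof -
  have "pmf \<xi> 0 * z = (\<Sum>n\<le>1. gw_size_prob \<xi> n * z ^ n)"
    using gw_size_prob_1[of \<xi>] by simp
  also have "\<dots> \<le> size_gf \<xi> z"
    using assms by (intro sum_le_gf[OF size_gf_facts]) auto
  finally show ?thesis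
    using assms by (smt (verit) mult_pos_pos)
qed

subsection \<open>Comparing size generating functions\<close>

text \<open>The convexity argument: if \<open>y\<^sub>B = z \<phi>(y\<^sub>B)\<close> but \<open>y\<^sub>A < z \<phi>(y\<^sub>A)\<close>, then \<open>y\<^sub>A\<close> cannot lie
  in \<open>[y\<^sub>B, 1]\<close>, since on that interval \<open>\<phi>\<close> lies below its chord from \<open>y\<^sub>B\<close> to \<open>1\<close>.\<close>

lemma less_fixed_point_of_convex:
  fixes \<phi> :: "real \<Rightarrow> real"
  assumes "convex_on {0..1} \<phi>" "\<phi> 1 = 1" and z: "0 \<le> z" "z \<le> 1"
    and yB: "0 \<le> yB" "yB < 1" "yB = z * \<phi> yB"
    and yA: "yA \<le> 1" "yA < z * \<phi> yA"
  shows "yA < yB"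
proof (rule ccontr)
  assume "\<not> yA < yB"
  define l where "l = (yA - yB) / (1 - yB)"
  have l: "0 \<le> l" "l \<le> 1"
    using \<open>\<not> yA < yB\<close> yB yA by (auto simp: l_def field_simps)
  have "l * (1 - yB) = yA - yB"
    using yB(2) by (simp add: l_def)
  then have yA_eq: "yA = (1 - l) * yB + l * 1"
    by (simp add: algebra_simps)
  have "\<phi> yA \<le> (1 - l) * \<phi> yB + l * \<phi> 1"
    using convex_onD[OF assms(1), of l yB 1] l yB yA_eq by simp
  then have "z * \<phi> yA \<le> z * ((1 - l) * \<phi> yB + l)"
    using assms(2) z by (intro mult_left_mono) auto
  also have "\<dots> = (1 - l) * (z * \<phi> yB) + l * z"
    by (simp add: algebra_simps)
  also have "\<dots> \<le> yA"
    using yA_eq yB(3) l z by (simp add: mult_left_le)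
  finally show False
    using yA(2) by simp
qed

lemma size_gf_less_of_pgf_less:
  assumes "0 < pmf \<xi>A 0" and less: "\<And>y. 0 < y \<Longrightarrow> y < 1 \<Longrightarrow> pgf \<xi>A y < pgf \<xi>B y"
    and z: "0 < z" "z < 1"
  shows "size_gf \<xi>A z < size_gf \<xi>B z"
proof (rule less_fixed_point_of_convex)
  let ?YA = "size_gf \<xi>A z" and ?YB = "size_gf \<xi>B z"
  show "convex_on {0..1} (pgf \<xi>B)"
    by (rule convex_on_gf[OF pmf_gf_facts])
  show "0 \<le> ?YB" "?YB = z * pgf \<xi>B ?YB"
    using z by (auto intro: gf_nonneg[OF size_gf_facts] size_gf_fixed_point)
  show "?YB < 1" "?YA \<le> 1"
    using z size_gf_le_id[of z \<xi>A] size_gf_le_id[of z \<xi>B] by auto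
  have "0 < ?YA" "?YA < 1"
    using z assms(1) size_gf_le_id[of z \<xi>A] by (auto intro: size_gf_pos)
  then show "?YA < z * pgf \<xi>B ?YA"
    using size_gf_fixed_point[of z \<xi>A] less z by (metis less_eq_real_def mult_strict_left_mono)
qed (use z in auto)

definition size_gf_less :: "nat pmf \<Rightarrow> nat pmf \<Rightarrow> bool" where
  "size_gf_less \<xi>A \<xi>B \<longleftrightarrow> (\<forall>z. 0 < z \<and> z < 1 \<longrightarrow> size_gf \<xi>A z < size_gf \<xi>B z)"

lemma size_gf_lessI:
  "0 < pmf \<xi>A 0 \<Longrightarrow> (\<And>y. 0 < y \<Longrightarrow> y < 1 \<Longrightarrow> pgf \<xi>A y < pgf \<xi>B y) \<Longrightarrow> size_gf_less \<xi>A \<xi>B"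
  unfolding size_gf_less_def using size_gf_less_of_pgf_less by blast

lemma size_gf_less_trans: "size_gf_less \<xi>A \<xi>B \<Longrightarrow> size_gf_less \<xi>B \<xi>C \<Longrightarrow> size_gf_less \<xi>A \<xi>C"
  unfolding size_gf_less_def by (meson less_trans)

lemma size_gf_less_chain:
  assumes step: "\<And>k. a \<le> k \<Longrightarrow> size_gf_less (\<xi> k) (\<xi> (Suc k))" and "a \<le> m" "m < m'"
  shows "size_gf_less (\<xi> m) (\<xi> m')"
proof -
  have "Suc m \<le> m'"
    using assms by simp
  then show ?thesis
  proof (induction m' rule: dec_induct)
    case base
    show ?case using step \<open>a \<le> m\<close> .
  next
    case (step k)
    then show ?case
      using assms(1)[of k] \<open>a \<le> m\<close> size_gf_less_trans by simp
  qed
qed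

lemma pgf_eq_sum_if_bounded_support:
  assumes "\<And>k. M < k \<Longrightarrow> pmf \<xi> k = 0"
  shows "pgf \<xi> y = (\<Sum>k\<le>M. pmf \<xi> k * y ^ k)"
  unfolding gf_def by (rule suminf_finite) (auto simp: assms not_le)

lemma pmf_xi1:
  "1 \<le> m \<Longrightarrow> pmf (xi1 m) k = (m choose k) * (1 / real m) ^ k * (1 - 1 / real m) ^ (m - k)"
  unfolding xi1_def by (subst pmf_binomial) auto

lemma pgf_xi1:
  assumes "1 \<le> m"
  shows "pgf (xi1 m) y = (1 - (1 - y) / real m) ^ m"
proof -
  have "pgf (xi1 m) y = (\<Sum>k\<le>m. pmf (xi1 m) k * y ^ k)"
    using assms by (intro pgf_eq_sum_if_bounded_support) (auto simp: pmf_xi1 binomial_eq_0)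
  also have "\<dots> = (\<Sum>k\<le>m. (m choose k) * (y / real m) ^ k * (1 - 1 / real m) ^ (m - k))"
    using assms by (intro sum.cong) (auto simp: pmf_xi1 power_divide)
  also have "\<dots> = (y / real m + (1 - 1 / real m)) ^ m"
    by (subst binomial_ring) (simp add: atLeast0AtMost)
  also have "y / real m + (1 - 1 / real m) = 1 - (1 - y) / real m"
    using assms by (simp add: field_simps)
  finally show ?thesis .
qed

lemma pmf_xi5:
  assumes "1 \<le> m"
  shows "pmf (xi5 m) k = (if k = m then 1 / real m else 0) + (if k = 0 then 1 - 1 / real m else 0)"
proof -
  have "pmf (xi5 m) k = measure (measure_pmf (bernoulli_pmf (1 / real m))) ((\<lambda>b. if b then m else 0) -` {k})"
    unfolding xi5_def by (rule pmf_map)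
  moreover have "(\<lambda>b. if b then m else 0) -` {k} = (if k = m then {True} else {}) \<union> (if k = 0 then {False} else {})"
    using assms by (auto split: if_splits)
  ultimately show ?thesis
    using assms by (cases "k = m"; cases "k = 0") (auto simp: measure_pmf_single simp del: of_nat_eq_0_iff)
qed

lemma pgf_xi5:
  assumes "1 \<le> m"
  shows "pgf (xi5 m) y = 1 - (1 - y ^ m) / real m"
proof -
  have "pgf (xi5 m) y = (\<Sum>k\<le>m. pmf (xi5 m) k * y ^ k)"
    using assms by (intro pgf_eq_sum_if_bounded_support) (auto simp: pmf_xi5)
  also have "\<dots> = (\<Sum>k\<in>{0, m}. pmf (xi5 m) k * y ^ k)"
    by (rule sum.mono_neutral_right) (auto simp: pmf_xi5 assms)
  also have "\<dots> = 1 - (1 - y ^ m) / real m"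
    using assms by (simp add: pmf_xi5 field_simps)
  finally show ?thesis .
qed

lemma xi3_eq_xi5: "xi3 = xi5 2"
  unfolding xi3_def xi5_def by simp

lemma pgf_xi2: "pgf xi2 y = exp (y - 1)"
proof -
  have "(\<lambda>k. exp (-1) * (y ^ k /\<^sub>R fact k)) sums (exp (-1) * exp y)"
    by (intro sums_mult exp_converges)
  moreover have "(\<lambda>k. exp (-1) * (y ^ k /\<^sub>R fact k)) = (\<lambda>k. pmf xi2 k * y ^ k)"
    by (auto simp: xi2_def pmf_poisson divide_simps)
  ultimately show ?thesis
    unfolding gf_def by (simp add: sums_iff exp_diff exp_minus field_simps)
qed

lemma pgf_xi4: "0 \<le> y \<Longrightarrow> y < 1 \<Longrightarrow> pgf xi4 y = 1 / (2 - y)"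
proof -
  assume y: "0 \<le> y" "y < 1"
  have "(\<lambda>k. (1/2) * (y/2) ^ k) sums ((1/2) * (1 / (1 - y/2)))"
    using y by (intro sums_mult geometric_sums) auto
  moreover have "(\<lambda>k. (1/2) * (y/2) ^ k) = (\<lambda>k. pmf xi4 k * y ^ k)"
    by (auto simp: xi4_def pmf_geometric power_divide)
  ultimately show ?thesis
    unfolding gf_def using y by (simp add: sums_iff field_simps)
qed

lemma one_minus_div_power_less_Suc:
  fixes x :: real
  assumes x: "0 < x" "x < real m"
  shows "(1 - x / real m) ^ m < (1 - x / real (Suc m)) ^ Suc m"
proof -
  define a where "a = 1 - x / real m"
  define b where "b = 1 - x / real (Suc m)"
  define u where "u = (b - a) / a"
  have m: "1 \<le> m"
    using x by (cases m) auto
  have a: "0 < a"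
    using x by (simp add: a_def)
  have "x / real (Suc m) < x / real m"
    using x m by (intro divide_strict_left_mono) auto
  then have u: "0 < u"
    using a by (simp add: u_def a_def b_def)
  have bu: "b = a * (1 + u)"
    using a by (simp add: u_def field_simps)
  have "0 < real m" "0 < real m + real m * real m"
    using m by (simp_all add: add_pos_nonneg)
  then have "real (Suc m) * (b - a) = x / real m"
    by (simp add: a_def b_def field_simps)
  moreover have "a * (1 + real (Suc m) * u) = a + real (Suc m) * (b - a)"
    using a by (simp add: u_def field_simps)
  ultimately have key: "a * (1 + real (Suc m) * u) = 1"
    by (simp add: a_def)
  have bernoulli: "1 + real (Suc m) * u < (1 + u) ^ Suc m"
  proof -
    have "1 + real (Suc m) * u < (1 + u) * (1 + real m * u)"
      using u m by (simp add: algebra_simps)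
    also have "\<dots> \<le> (1 + u) * (1 + u) ^ m"
      using Bernoulli_inequality[of u m] u by (intro mult_left_mono) auto
    finally show ?thesis by simp
  qed
  have "a ^ m = a ^ Suc m * (1 + real (Suc m) * u)"
    using key by (simp add: mult.assoc)
  also have "\<dots> < a ^ Suc m * (1 + u) ^ Suc m"
    using bernoulli a by (intro mult_strict_left_mono) auto
  also have "\<dots> = b ^ Suc m"
    by (simp add: bu power_mult_distrib)
  finally show ?thesis
    by (simp only: a_def b_def)
qed

lemma one_minus_div_power_less_exp:
  fixes x :: real
  assumes x: "0 < x" "x \<le> real m"
  shows "(1 - x / real m) ^ m < exp (- x)"
proof -
  define v where "v = x / real m"
  have m: "0 < m"
    using x by (cases m) auto
  have v: "0 < v" "v \<le> 1"
    using x m by (auto simp: v_def)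
  have "1 - v < exp (- v)"
  proof -
    have "1 - v < (1 - v / 2) ^ 2"
      using v by (simp add: power2_eq_square algebra_simps)
    also have "\<dots> \<le> exp (- v / 2) ^ 2"
      using exp_ge_add_one_self[of "- v / 2"] v by (intro power_mono) auto
    also have "\<dots> = exp (- v)"
      by (simp flip: exp_double)
    finally show ?thesis .
  qed
  then have "(1 - v) ^ m < exp (- v) ^ m"
    using v m by (intro power_strict_mono) auto
  also have "exp (- v) ^ m = exp (- x)"
    using m by (simp add: v_def flip: exp_of_nat_mult)
  finally show ?thesis
    by (simp add: v_def)
qed

lemma pgf_xi1_less_Suc: "1 \<le> m \<Longrightarrow> 0 < y \<Longrightarrow> y < 1 \<Longrightarrow> pgf (xi1 m) y < pgf (xi1 (Suc m)) y"
  using one_minus_div_power_less_Suc[of "1 - y" m] by (simp add: pgf_xi1)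

lemma pgf_xi1_less_xi2: "1 \<le> m \<Longrightarrow> 0 < y \<Longrightarrow> y < 1 \<Longrightarrow> pgf (xi1 m) y < pgf xi2 y"
  using one_minus_div_power_less_exp[of "1 - y" m] by (simp add: pgf_xi1 pgf_xi2)

lemma pgf_xi2_less_xi3:
  fixes y :: real
  assumes y: "0 < y" "y < 1"
  shows "pgf xi2 y < pgf xi3 y"
proof -
  define x where "x = 1 - y"
  have x: "0 < x" "x < 1"
    using y by (auto simp: x_def)
  have lower: "0 < 1 + x + x\<^sup>2 / 2" "1 + x + x\<^sup>2 / 2 \<le> exp x"
    using exp_lower_Taylor_quadratic[of x] x by (auto intro: add_pos_nonneg)
  have "exp (y - 1) = 1 / exp x"
    by (simp add: x_def exp_diff)
  also have "\<dots> \<le> 1 / (1 + x + x\<^sup>2 / 2)"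
    using lower by (intro divide_left_mono) auto
  also have "\<dots> < 1 - x + x\<^sup>2 / 2"
  proof -
    have "(1 - x + x\<^sup>2 / 2) * (1 + x + x\<^sup>2 / 2) = 1 + x ^ 4 / 4"
      by (simp add: algebra_simps power2_eq_square power4_eq_xxxx)
    then show ?thesis
      using lower x by (simp add: divide_less_eq)
  qed
  also have "\<dots> = 1 - (1 - y ^ 2) / 2"
    by (simp add: x_def power2_eq_square field_simps)
  finally show ?thesis
    by (simp add: pgf_xi2 xi3_eq_xi5 pgf_xi5)
qed

lemma pgf_xi3_less_xi4:
  fixes y :: real
  assumes y: "0 < y" "y < 1"
  shows "pgf xi3 y < pgf xi4 y"
proof -
  have "(1 - (1 - y ^ 2) / 2) * (2 - y) = 1 - y * (1 - y) ^ 2 / 2"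
    by (simp add: power2_eq_square field_simps)
  also have "\<dots> < 1"
    using y by simp
  finally show ?thesis
    using y by (simp add: xi3_eq_xi5 pgf_xi5 pgf_xi4 less_divide_eq)
qed

lemma pgf_xi4_less_xi5_3:
  fixes y :: real
  assumes y: "0 < y" "y < 1"
  shows "pgf xi4 y < pgf (xi5 3) y"
proof -
  have "(1 - (1 - y ^ 3) / 3) * (2 - y) = 1 + (1 - y) ^ 3 * (1 + y) / 3"
    by (simp add: power3_eq_cube field_simps)
  also have "\<dots> > 1"
    using y by simp
  finally show ?thesis
    using y by (simp add: pgf_xi5 pgf_xi4 divide_less_eq)
qed

lemma pgf_xi5_less_Suc:
  fixes y :: real
  assumes y: "0 < y" "y < 1" and m: "1 \<le> m"
  shows "pgf (xi5 m) y < pgf (xi5 (Suc m)) y"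
proof -
  have "real m * y ^ m = (\<Sum>j<m. y ^ m)"
    by simp
  also have "\<dots> < (\<Sum>j<m. y ^ j)"
    using m y by (intro sum_strict_mono) (auto intro!: power_strict_decreasing simp: lessThan_empty_iff)
  finally have "0 < (1 - y) * ((\<Sum>j<m. y ^ j) - real m * y ^ m)"
    using y by simp
  also have "\<dots> = (1 - y ^ m) - real m * y ^ m * (1 - y)"
    by (simp add: one_diff_power_eq algebra_simps)
  also have "\<dots> = real (Suc m) * (1 - y ^ m) - real m * (1 - y ^ Suc m)"
    by (simp add: algebra_simps)
  finally have "(1 - y ^ Suc m) / real (Suc m) < (1 - y ^ m) / real m"
    using m by (simp add: divide_less_eq less_divide_eq mult.commute)
  then show ?thesis
    using m by (simp add: pgf_xi5)
qed

lemma size_gf_less_xi1: "2 \<le> m \<Longrightarrow> m < m' \<Longrightarrow> size_gf_less (xi1 m) (xi1 m')"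
  by (rule size_gf_less_chain[of 2])
     (auto intro!: size_gf_lessI pgf_xi1_less_Suc simp: pmf_xi1)

lemma size_gf_less_xi5: "2 \<le> m \<Longrightarrow> m < m' \<Longrightarrow> size_gf_less (xi5 m) (xi5 m')"
  by (rule size_gf_less_chain[of 2])
     (auto intro!: size_gf_lessI pgf_xi5_less_Suc simp: pmf_xi5)

lemma size_gf_less_xi1_xi2: "2 \<le> m \<Longrightarrow> size_gf_less (xi1 m) xi2"
  by (auto intro!: size_gf_lessI pgf_xi1_less_xi2 simp: pmf_xi1)

lemma size_gf_less_xi2_xi3: "size_gf_less xi2 xi3"
  by (rule size_gf_lessI[OF _ pgf_xi2_less_xi3]) (simp_all add: xi2_def)

lemma size_gf_less_xi3_xi4: "size_gf_less xi3 xi4"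
  by (rule size_gf_lessI[OF _ pgf_xi3_less_xi4]) (simp_all add: xi3_eq_xi5 pmf_xi5)

lemma size_gf_less_xi4_xi5_3: "size_gf_less xi4 (xi5 3)"
  by (rule size_gf_lessI[OF _ pgf_xi4_less_xi5_3]) (simp_all add: xi4_def)

subsection \<open>Mellin transforms\<close>

text \<open>\<open>ennreal\<close> truncates negative values, but every integrand below is nonnegative for
  \<open>t > 0\<close>; the point \<open>t = 0\<close> never contributes since \<open>0 powr _ = 0\<close>.\<close>

definition mellin :: "real \<Rightarrow> (real \<Rightarrow> real) \<Rightarrow> ennreal" where
  "mellin s f = (\<integral>\<^sup>+t. ennreal (indicator {0..} t * t powr (s - 1) * f t) \<partial>lborel)"

lemma measurable_gf_exp [measurable]: "(\<lambda>t. gf p (exp (- t))) \<in> borel_measurable borel"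
  unfolding gf_def by measurable

lemma mellin_strict_mono:
  assumes [measurable]: "f \<in> borel_measurable borel" "g \<in> borel_measurable borel"
    and less: "\<And>t. 0 < t \<Longrightarrow> 0 \<le> f t \<and> f t < g t" and finite: "mellin s g < \<infinity>"
  shows "mellin s f < mellin s g"
  unfolding mellin_def
proof (rule nn_integral_less)
  let ?f = "\<lambda>t. ennreal (indicator {0..} t * t powr (s - 1) * f t)"
  let ?g = "\<lambda>t. ennreal (indicator {0..} t * t powr (s - 1) * g t)"
  have le: "?f t \<le> ?g t" for t
  proof (cases "0 < t")
    case True
    then show ?thesis
      using less[OF True] by (intro ennreal_leI mult_left_mono) auto
  qed (auto simp: not_less le_less)
  show "?f \<in> borel_measurable lborel" "?g \<in> borel_measurable lborel"
    by measurable
  show "integral\<^sup>N lborel ?f \<noteq> \<infinity>"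
    using order.strict_trans1[OF nn_integral_mono[OF le] finite[unfolded mellin_def]]
    by (simp add: less_top)
  show "AE t in lborel. ?f t \<le> ?g t"
    using le by simp
  show "\<not> (AE t in lborel. ?g t \<le> ?f t)"
  proof
    assume "AE t in lborel. ?g t \<le> ?f t"
    then obtain N where N: "{t \<in> space lborel. \<not> ?g t \<le> ?f t} \<subseteq> N"
      "emeasure lborel N = 0" "N \<in> sets lborel"
      by (rule AE_E)
    have "?f t < ?g t" if "0 < t" "t < 1" for t
      using less[of t] that by (intro ennreal_lessI mult_strict_left_mono) auto
    then have "{0<..<1} \<subseteq> N"
      using N(1) by (auto simp: not_le)
    then have "emeasure lborel {0<..<1::real} \<le> emeasure lborel N"
      using N(3) by (intro emeasure_mono) auto
    then show False
      using N(2) by simp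
  qed
qed

lemma mellin_cmult:
  assumes [measurable]: "f \<in> borel_measurable borel" and "0 \<le> c"
  shows "mellin s (\<lambda>t. c * f t) = ennreal c * mellin s f"
proof -
  have "mellin s (\<lambda>t. c * f t) = (\<integral>\<^sup>+t. ennreal c * ennreal (indicator {0..} t * t powr (s - 1) * f t) \<partial>lborel)"
    unfolding mellin_def using assms(2) by (intro nn_integral_cong) (simp add: ennreal_mult'[symmetric] algebra_simps)
  also have "\<dots> = ennreal c * mellin s f"
    unfolding mellin_def by (rule nn_integral_cmult) measurable
  finally show ?thesis .
qed

lemma mellin_suminf:
  assumes nonneg: "\<And>n t. 0 \<le> t \<Longrightarrow> 0 \<le> f n t"
    and sums: "\<And>t. 0 \<le> t \<Longrightarrow> (\<lambda>n. f n t) sums F t"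
    and [measurable]: "\<And>n. f n \<in> borel_measurable borel"
  shows "mellin s F = (\<Sum>n. mellin s (f n))"
proof -
  have "ennreal (indicator {0..} t * t powr (s - 1) * F t) = (\<Sum>n. ennreal (indicator {0..} t * t powr (s - 1) * f n t))" for t
  proof (cases "0 \<le> t")
    case True
    have "(\<lambda>n. t powr (s - 1) * f n t) sums (t powr (s - 1) * F t)"
      by (rule sums_mult[OF sums[OF True]])
    then show ?thesis
      using True nonneg by (simp add: suminf_ennreal_eq[symmetric])
  qed simp
  then show ?thesis
    unfolding mellin_def by (simp only:) (rule nn_integral_suminf, measurable)
qed

lemma mellin_exp_scaled:
  assumes a: "0 < a" and s: "0 < s"
  shows "mellin a (\<lambda>t. exp (- (s * t))) = ennreal (s powr (- a) * Gamma a)"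
proof -
  define f where "f = (\<lambda>u::real. ennreal (indicator {0..} u * u powr (a - 1) / exp u))"
  have [measurable]: "f \<in> borel_measurable borel"
    unfolding f_def by measurable
  have "ennreal (Gamma a) = (\<integral>\<^sup>+u. f u \<partial>lborel)"
    unfolding f_def by (rule Gamma_conv_nn_integral_real[OF a])
  also have "\<dots> = ennreal s * (\<integral>\<^sup>+x. f (0 + s * x) \<partial>lborel)"
    using s by (subst nn_integral_real_affine[of _ s 0]) auto
  also have "(\<integral>\<^sup>+x. f (0 + s * x) \<partial>lborel) = mellin a (\<lambda>t. s powr (a - 1) * exp (- (s * t)))"
    unfolding mellin_def
  proof (rule nn_integral_cong)
    fix x :: real
    show "f (0 + s * x) = ennreal (indicator {0..} x * x powr (a - 1) * (s powr (a - 1) * exp (- (s * x))))"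
      using s by (cases "x \<ge> 0") (auto simp: f_def indicator_def powr_mult exp_minus field_simps zero_le_mult_iff)
  qed
  also have "\<dots> = ennreal (s powr (a - 1)) * mellin a (\<lambda>t. exp (- (s * t)))"
    by (rule mellin_cmult) auto
  finally have "ennreal (s powr (- a)) * ennreal (Gamma a)
      = ennreal (s powr (- a) * (s * s powr (a - 1))) * mellin a (\<lambda>t. exp (- (s * t)))"
    using s by (simp add: ennreal_mult' mult.assoc)
  moreover have "s powr (- a) * (s * s powr (a - 1)) = 1"
    using s by (simp add: powr_add[symmetric] powr_mult_base)
  ultimately show ?thesis
    using s a by (simp add: ennreal_mult' Gamma_real_pos)
qed

lemma summable_mult_powr_nonpos:
  assumes "\<And>n. 0 \<le> p n" "summable p" "\<alpha> \<le> 0"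
  shows "summable (\<lambda>n. p n * real n powr \<alpha>)"
proof (rule summable_comparison_test[OF _ assms(2)])
  have "real n powr \<alpha> \<le> 1" for n
    using assms(3) powr_mono[of \<alpha> 0 "real n"] by (cases "n = 0") auto
  then show "\<exists>N. \<forall>n\<ge>N. norm (p n * real n powr \<alpha>) \<le> p n"
    using assms(1) by (auto intro!: exI[of _ 0] mult_left_le simp: abs_mult)
qed

lemma mellin_gf_exp:
  assumes p: "\<And>n. 0 \<le> p n" "summable p" "p 0 = 0" and \<alpha>: "\<alpha> < 0"
  shows "mellin (- \<alpha>) (\<lambda>t. gf p (exp (- t))) = ennreal (Gamma (- \<alpha>) * (\<Sum>n. p n * real n powr \<alpha>))"
proof -
  have sum: "summable (\<lambda>n. p n * real n powr \<alpha>)"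
    using p \<alpha> by (intro summable_mult_powr_nonpos) auto
  have Gamma: "0 < Gamma (- \<alpha>)"
    using \<alpha> by (intro Gamma_real_pos) auto
  have termwise: "mellin (- \<alpha>) (\<lambda>t. p n * exp (- t) ^ n) = ennreal (Gamma (- \<alpha>) * (p n * real n powr \<alpha>))" for n
  proof (cases "n = 0")
    case False
    have "mellin (- \<alpha>) (\<lambda>t. p n * exp (- t) ^ n) = ennreal (p n) * mellin (- \<alpha>) (\<lambda>t. exp (- (real n * t)))"
      using p(1) by (simp add: mellin_cmult flip: exp_of_nat_mult)
    also have "\<dots> = ennreal (p n) * ennreal (real n powr \<alpha> * Gamma (- \<alpha>))"
      using False \<alpha> by (simp add: mellin_exp_scaled)
    also have "\<dots> = ennreal (Gamma (- \<alpha>) * (p n * real n powr \<alpha>))"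
      using p(1)[of n] by (simp add: ennreal_mult'[symmetric] algebra_simps)
    finally show ?thesis .
  qed (simp add: mellin_def p(3))
  have "mellin (- \<alpha>) (\<lambda>t. gf p (exp (- t))) = (\<Sum>n. mellin (- \<alpha>) (\<lambda>t. p n * exp (- t) ^ n))"
    using p by (intro mellin_suminf sums_gf) auto
  also have "\<dots> = ennreal (\<Sum>n. Gamma (- \<alpha>) * (p n * real n powr \<alpha>))"
    unfolding termwise using p(1) Gamma by (intro suminf_ennreal2 summable_mult sum) auto
  finally show ?thesis
    by (simp add: suminf_mult[OF sum])
qed

text \<open>Fubini applied to \<open>e\<^sup>-\<^sup>t - e\<^sup>-\<^sup>n\<^sup>t = t \<integral>\<^sub>1\<^sup>n e\<^sup>-\<^sup>s\<^sup>t ds\<close>.\<close>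

lemma mellin_exp_diff:
  fixes \<beta> n G :: real
  assumes \<beta>: "0 \<le> \<beta>" "\<beta> < 1" and n: "1 \<le> n"
    and G: "((\<lambda>s. s powr (\<beta> - 1)) has_integral G) {1..n}"
  shows "mellin (- \<beta>) (\<lambda>t. exp (- t) - exp (- (n * t))) = ennreal (Gamma (1 - \<beta>) * G)"
proof -
  define H where "H t s = ennreal (indicator {0..} t * indicator {1..n} s * t powr (- \<beta>) * exp (- (s * t)))" for t s :: real
  have inner_s: "(\<integral>\<^sup>+s. H t s \<partial>lborel) = ennreal (indicator {0..} t * t powr (- \<beta> - 1) * (exp (- t) - exp (- (n * t))))" for t
  proof (cases "t > 0")
    case False
    then have "t < 0 \<or> t = 0" by auto
    then show ?thesis by (auto simp: H_def)
  next
    case True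
    define F where "F s = - (t powr (- \<beta>) * exp (- (s * t)) / t)" for s
    have "((\<lambda>s. t powr (- \<beta>) * exp (- (s * t))) has_integral (F n - F 1)) {1..n}"
    proof (rule fundamental_theorem_of_calculus[OF n])
      fix s assume "s \<in> {1..n}"
      show "(F has_vector_derivative t powr (- \<beta>) * exp (- (s * t))) (at s within {1..n})"
        unfolding F_def has_real_derivative_iff_has_vector_derivative[symmetric] using True
        by (auto intro!: derivative_eq_intros simp: field_simps)
    qed
    moreover have "F n - F 1 = t powr (- \<beta> - 1) * (exp (- t) - exp (- (n * t)))"
      using True by (simp add: F_def powr_diff field_simps)
    ultimately have integral: "((\<lambda>s. t powr (- \<beta>) * exp (- (s * t))) has_integral t powr (- \<beta> - 1) * (exp (- t) - exp (- (n * t)))) {1..n}"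
      by simp
    have "(\<integral>\<^sup>+s. ennreal (t powr (- \<beta>) * exp (- (s * t))) * indicator {1..n} s \<partial>lborel)
        = ennreal (t powr (- \<beta> - 1) * (exp (- t) - exp (- (n * t))))"
      by (rule nn_integral_has_integral_lebesgue'[OF _ integral]) auto
    moreover have "(\<integral>\<^sup>+s. H t s \<partial>lborel) = (\<integral>\<^sup>+s. ennreal (t powr (- \<beta>) * exp (- (s * t))) * indicator {1..n} s \<partial>lborel)"
      using True by (intro nn_integral_cong) (auto simp: H_def indicator_def)
    ultimately show ?thesis
      using True by simp
  qed
  have inner_t: "(\<integral>\<^sup>+t. H t s \<partial>lborel) = ennreal (indicator {1..n} s * (s powr (\<beta> - 1) * Gamma (1 - \<beta>)))" for s
  proof (cases "s \<in> {1..n}")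
    case True
    have "(\<integral>\<^sup>+t. H t s \<partial>lborel) = mellin (1 - \<beta>) (\<lambda>t. exp (- (s * t)))"
      unfolding mellin_def using True by (intro nn_integral_cong) (auto simp: H_def mult.commute)
    also have "\<dots> = ennreal (s powr (- (1 - \<beta>)) * Gamma (1 - \<beta>))"
      using True \<beta> by (intro mellin_exp_scaled) auto
    finally show ?thesis
      using True by simp
  qed (simp add: H_def)
  have [measurable]: "case_prod H \<in> borel_measurable (lborel \<Otimes>\<^sub>M lborel)"
    unfolding H_def case_prod_unfold by measurable
  have "mellin (- \<beta>) (\<lambda>t. exp (- t) - exp (- (n * t))) = (\<integral>\<^sup>+t. (\<integral>\<^sup>+s. H t s \<partial>lborel) \<partial>lborel)"
    unfolding mellin_def inner_s by simp
  also have "\<dots> = (\<integral>\<^sup>+s. (\<integral>\<^sup>+t. H t s \<partial>lborel) \<partial>lborel)"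
    by (rule lborel_pair.Fubini'[symmetric]) measurable
  also have "\<dots> = ennreal (G * Gamma (1 - \<beta>))"
    unfolding inner_t
    by (rule nn_integral_has_integral_lebesgue[OF _ has_integral_mult_left[OF G]])
       (use \<beta> in \<open>auto intro!: mult_nonneg_nonneg less_imp_le[OF Gamma_real_pos]\<close>)
  finally show ?thesis
    by (simp add: mult.commute)
qed

lemma mellin_one_minus_gf_exp:
  fixes G :: "nat \<Rightarrow> real"
  assumes p: "\<And>n. 0 \<le> p n" "p sums 1" "p 0 = 0" and \<beta>: "0 \<le> \<beta>" "\<beta> < 1"
    and G: "\<And>n. 1 \<le> n \<Longrightarrow> ((\<lambda>s. s powr (\<beta> - 1)) has_integral G n) {1..real n}"
  shows "mellin (- \<beta>) (\<lambda>t. exp (- t) - gf p (exp (- t))) = (\<Sum>n. ennreal (p n * (Gamma (1 - \<beta>) * G n)))"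
proof -
  have summable: "summable p"
    using p(2) by (rule sums_summable)
  have nonneg: "0 \<le> p n * (exp (- t) - exp (- t) ^ n)" if "0 \<le> t" for n t
    using p power_decreasing[of 1 n "exp (- t)"] that
    by (cases "n = 0") (auto intro!: mult_nonneg_nonneg)
  have sums: "(\<lambda>n. p n * (exp (- t) - exp (- t) ^ n)) sums (exp (- t) - gf p (exp (- t)))" if "0 \<le> t" for t
    using sums_diff[OF sums_mult2[OF p(2), of "exp (- t)"] sums_gf[OF p(1) summable, of "exp (- t)"]] that
    by (simp add: algebra_simps)
  have termwise: "mellin (- \<beta>) (\<lambda>t. p n * (exp (- t) - exp (- t) ^ n)) = ennreal (p n * (Gamma (1 - \<beta>) * G n))" for n
  proof (cases "n = 0")
    case False
    have "mellin (- \<beta>) (\<lambda>t. p n * (exp (- t) - exp (- t) ^ n))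
        = ennreal (p n) * mellin (- \<beta>) (\<lambda>t. exp (- t) - exp (- (real n * t)))"
      using p(1) by (simp add: mellin_cmult flip: exp_of_nat_mult)
    also have "\<dots> = ennreal (p n * (Gamma (1 - \<beta>) * G n))"
      using False \<beta> p(1)[of n] G[of n] by (simp add: mellin_exp_diff ennreal_mult'[symmetric])
    finally show ?thesis .
  qed (simp add: mellin_def p(3))
  show ?thesis
    unfolding termwise[symmetric] using nonneg sums by (intro mellin_suminf) auto
qed

lemma le_sqrt_mult_exp:
  fixes t d :: real
  assumes t: "0 < t" and d: "0 \<le> d" "d \<le> exp (- t)" "d\<^sup>2 \<le> 4 * (1 - exp (- t)) / exp (- t)"
  shows "d \<le> 12 * sqrt t * exp (- t)"
proof (cases "1 \<le> t")
  case True
  then have "1 \<le> 12 * sqrt t"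
    using real_sqrt_ge_one[of t] by linarith
  then have "1 * exp (- t) \<le> 12 * sqrt t * exp (- t)"
    by (intro mult_right_mono) auto
  then show ?thesis
    using d(2) by linarith
next
  case False
  have "exp t \<le> exp 1"
    using False by simp
  then have exp_t: "exp t \<le> 3"
    using exp_le by linarith
  have "1 - exp (- t) \<le> t"
    using exp_ge_add_one_self[of "- t"] by linarith
  then have "4 * (1 - exp (- t)) * exp t \<le> 4 * t * 3"
    using exp_t t by (intro mult_mono) auto
  moreover have "4 * (1 - exp (- t)) / exp (- t) = 4 * (1 - exp (- t)) * exp t"
    by (simp add: exp_minus divide_inverse)
  ultimately have "d \<le> sqrt (12 * t)"
    using d(3) by (intro real_le_rsqrt) linarith
  also have "\<dots> = sqrt 12 * sqrt t"
    by (rule real_sqrt_mult)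
  also have "\<dots> \<le> 4 * sqrt t"
    using t by (intro mult_right_mono real_le_lsqrt) auto
  also have "\<dots> \<le> 4 * sqrt t * (3 * exp (- t))"
  proof -
    have "1 \<le> 3 * exp (- t)"
      using exp_t by (simp add: exp_minus divide_simps)
    then show ?thesis
      using mult_left_mono[of 1 "3 * exp (- t)" "4 * sqrt t"] t by simp
  qed
  finally show ?thesis
    by simp
qed

lemma mellin_finite_if_sqrt_bound:
  fixes D :: "real \<Rightarrow> real"
  assumes \<beta>: "0 \<le> \<beta>" "\<beta> < 1/2"
    and D: "\<And>t. 0 < t \<Longrightarrow> 0 \<le> D t \<and> D t \<le> exp (- t) \<and> (D t)\<^sup>2 \<le> 4 * (1 - exp (- t)) / exp (- t)"
  shows "mellin (- \<beta>) D < \<infinity>"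
proof -
  have "mellin (- \<beta>) D \<le> mellin (1/2 - \<beta>) (\<lambda>t. 12 * exp (- (1 * t)))"
    unfolding mellin_def
  proof (intro nn_integral_mono ennreal_leI)
    fix t :: real
    show "indicator {0..} t * t powr (- \<beta> - 1) * D t \<le> indicator {0..} t * t powr (1/2 - \<beta> - 1) * (12 * exp (- (1 * t)))"
    proof (cases "0 < t")
      case True
      have "t powr (- \<beta> - 1) * D t \<le> t powr (- \<beta> - 1) * (12 * sqrt t * exp (- t))"
        using le_sqrt_mult_exp[OF True] D[OF True] by (intro mult_left_mono) auto
      also have "\<dots> = t powr (1/2 - \<beta> - 1) * (12 * exp (- (1 * t)))"
        using True by (simp add: powr_half_sqrt[symmetric] powr_add[symmetric] algebra_simps)
      finally show ?thesis
        using True by simp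
    qed (auto simp: not_less le_less)
  qed
  also have "\<dots> = ennreal 12 * ennreal (1 powr (- (1/2 - \<beta>)) * Gamma (1/2 - \<beta>))"
    using \<beta> by (subst mellin_exp_scaled[symmetric]) (auto simp: mellin_cmult)
  also have "\<dots> < \<infinity>"
    by (simp add: ennreal_mult_less_top)
  finally show ?thesis .
qed

subsection \<open>Trees dominating the critical binary tree\<close>

text \<open>For \<open>Bin(2, 1/2)\<close> the functional equation \<open>Y = z ((1 + Y) / 2)\<^sup>2\<close> is quadratic,
  which gives \<open>1 - Y(z) = O(\<surd>(1 - z))\<close>; domination by this tree also forces \<open>|T| < \<infinity>\<close> a.s.\<close>

lemma one_minus_size_gf_bin2_sq_le:
  assumes z: "0 < z" "z < 1"
  shows "(1 - size_gf (xi1 2) z)\<^sup>2 \<le> 4 * (1 - z) / z"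
proof -
  define Y where "Y = size_gf (xi1 2) z"
  have Y: "Y \<le> 1"
    unfolding Y_def using z by (intro size_gf_le_1) auto
  have "Y = z * pgf (xi1 2) Y"
    unfolding Y_def using z by (intro size_gf_fixed_point) auto
  then have fixed: "4 * Y = z * (1 + Y)\<^sup>2"
    by (simp add: pgf_xi1 power2_eq_square field_simps)
  have "z * (1 - Y)\<^sup>2 = z * (1 + Y)\<^sup>2 - 4 * z * Y"
    by (simp add: power2_eq_square algebra_simps)
  also have "\<dots> = 4 * Y * (1 - z)"
    using fixed by (simp add: algebra_simps)
  also have "\<dots> \<le> 4 * (1 - z)"
  proof -
    have "Y * (1 - z) \<le> 1 * (1 - z)"
      using Y z by (intro mult_right_mono) auto
    then show ?thesis
      by linarith
  qed
  finally show ?thesis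
    unfolding Y_def[symmetric] using z by (simp add: le_divide_eq mult.commute)
qed

definition size_gf_above_bin2 :: "nat pmf \<Rightarrow> bool" where
  "size_gf_above_bin2 \<xi> \<longleftrightarrow> (\<forall>z. 0 < z \<and> z < 1 \<longrightarrow> size_gf (xi1 2) z \<le> size_gf \<xi> z)"

lemma size_gf_above_bin2_sums_1:
  assumes "size_gf_above_bin2 \<xi>"
  shows "gw_size_prob \<xi> sums 1"
proof -
  define S where "S = (\<Sum>n. gw_size_prob \<xi> n)"
  have "1 \<le> S"
  proof (rule ccontr)
    assume "\<not> 1 \<le> S"
    have square: "0 < (1 - S)\<^sup>2"
      using \<open>\<not> 1 \<le> S\<close> by simp
    define d where "d = (1 - S)\<^sup>2 / 8"
    define z where "z = 1 / (1 + d)"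
    have d: "0 < d"
      using square by (simp add: d_def)
    then have z: "0 < z" "z < 1" "(1 - z) / z = d"
      by (auto simp: z_def field_simps)
    have "size_gf \<xi> z \<le> S"
      unfolding S_def using z by (intro gf_le_suminf[OF size_gf_facts]) auto
    moreover have "size_gf (xi1 2) z \<le> size_gf \<xi> z"
      using assms z by (simp add: size_gf_above_bin2_def)
    ultimately have "(1 - S)\<^sup>2 \<le> (1 - size_gf (xi1 2) z)\<^sup>2"
      using \<open>\<not> 1 \<le> S\<close> by (intro power_mono) auto
    also have "\<dots> \<le> 4 * ((1 - z) / z)"
      using one_minus_size_gf_bin2_sq_le[OF z(1,2)] by simp
    also have "\<dots> = (1 - S)\<^sup>2 / 2"
      unfolding z(3) d_def by simp
    also have "\<dots> < (1 - S)\<^sup>2"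
      using square by simp
    finally show False
      by simp
  qed
  then have "S = 1"
    using suminf_gw_size_prob_le_1[of \<xi>] by (simp add: S_def)
  then show ?thesis
    using summable_gw_size_prob[of \<xi>] by (simp add: S_def summable_sums_iff)
qed

lemma size_gf_above_bin2_mellin_finite:
  assumes "size_gf_above_bin2 \<xi>" "0 \<le> \<beta>" "\<beta> < 1/2"
  shows "mellin (- \<beta>) (\<lambda>t. exp (- t) - size_gf \<xi> (exp (- t))) < \<infinity>"
proof (rule mellin_finite_if_sqrt_bound[OF assms(2,3)])
  fix t :: real assume "0 < t"
  then have e: "0 < exp (- t)" "exp (- t) < 1"
    by auto
  have upper: "size_gf \<xi> (exp (- t)) \<le> exp (- t)"
    using e size_gf_le_id by auto
  have "size_gf (xi1 2) (exp (- t)) \<le> size_gf \<xi> (exp (- t))"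
    using assms(1) e unfolding size_gf_above_bin2_def by blast
  then have "exp (- t) - size_gf \<xi> (exp (- t)) \<le> 1 - size_gf (xi1 2) (exp (- t))"
    using e by linarith
  then have "(exp (- t) - size_gf \<xi> (exp (- t)))\<^sup>2 \<le> (1 - size_gf (xi1 2) (exp (- t)))\<^sup>2"
    using upper by (intro power_mono) auto
  also have "\<dots> \<le> 4 * (1 - exp (- t)) / exp (- t)"
    by (rule one_minus_size_gf_bin2_sq_le[OF e])
  finally show "0 \<le> exp (- t) - size_gf \<xi> (exp (- t)) \<and> exp (- t) - size_gf \<xi> (exp (- t)) \<le> exp (- t) \<and>
      (exp (- t) - size_gf \<xi> (exp (- t)))\<^sup>2 \<le> 4 * (1 - exp (- t)) / exp (- t)"
    using upper e gf_nonneg[OF size_gf_facts, of "exp (- t)" \<xi>] by simp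
qed

lemma size_gf_above_bin2_if_less: "size_gf_less (xi1 2) \<xi> \<Longrightarrow> size_gf_above_bin2 \<xi>"
  unfolding size_gf_above_bin2_def size_gf_less_def by (simp add: less_imp_le)

lemma size_gf_above_bin2_xi1: "2 \<le> m \<Longrightarrow> size_gf_above_bin2 (xi1 m)"
  using size_gf_less_xi1[of 2 m] size_gf_above_bin2_if_less
  by (cases "m = 2") (auto simp: size_gf_above_bin2_def)

lemma size_gf_above_bin2_xi2: "size_gf_above_bin2 xi2"
  and size_gf_above_bin2_xi3: "size_gf_above_bin2 xi3"
  and size_gf_above_bin2_xi4: "size_gf_above_bin2 xi4"
  and size_gf_above_bin2_xi5: "3 \<le> m \<Longrightarrow> size_gf_above_bin2 (xi5 m)"
proof -
  have xi2: "size_gf_less (xi1 2) xi2"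
    by (rule size_gf_less_xi1_xi2) simp
  have xi3: "size_gf_less (xi1 2) xi3"
    using xi2 size_gf_less_xi2_xi3 by (rule size_gf_less_trans)
  have xi4: "size_gf_less (xi1 2) xi4"
    using xi3 size_gf_less_xi3_xi4 by (rule size_gf_less_trans)
  have xi5: "size_gf_less (xi1 2) (xi5 3)"
    using xi4 size_gf_less_xi4_xi5_3 by (rule size_gf_less_trans)
  show "size_gf_above_bin2 xi2" "size_gf_above_bin2 xi3" "size_gf_above_bin2 xi4"
    using xi2 xi3 xi4 by (auto intro: size_gf_above_bin2_if_less)
  show "size_gf_above_bin2 (xi5 m)" if "3 \<le> m"
    using that xi5 size_gf_less_xi5[of 3 m]
    by (cases "m = 3") (auto intro!: size_gf_above_bin2_if_less intro: size_gf_less_trans)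
qed

lemma gw_mu_less_if_size_gf_less:
  assumes "size_gf_less \<xi>A \<xi>B" "\<alpha> < 0"
  shows "gw_mu \<xi>A \<alpha> < gw_mu \<xi>B \<alpha>"
proof -
  have "mellin (- \<alpha>) (\<lambda>t. size_gf \<xi>A (exp (- t))) < mellin (- \<alpha>) (\<lambda>t. size_gf \<xi>B (exp (- t)))"
    using assms
    by (intro mellin_strict_mono)
       (auto simp: size_gf_less_def mellin_gf_exp size_gf_facts intro: gf_nonneg[OF size_gf_facts])
  then have "ennreal (Gamma (- \<alpha>) * gw_mu \<xi>A \<alpha>) < ennreal (Gamma (- \<alpha>) * gw_mu \<xi>B \<alpha>)"
    using assms(2) by (simp add: mellin_gf_exp size_gf_facts gw_mu_def)
  then have "Gamma (- \<alpha>) * gw_mu \<xi>A \<alpha> < Gamma (- \<alpha>) * gw_mu \<xi>B \<alpha>"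
    by (metis ennreal_leI not_le)
  moreover have "0 < Gamma (- \<alpha>)"
    using assms(2) by (intro Gamma_real_pos) auto
  ultimately show ?thesis
    by simp
qed

lemma sum_weights_less_if_gf_less:
  fixes p q G :: "nat \<Rightarrow> real"
  assumes p: "\<And>n. 0 \<le> p n" "p sums 1" "p 0 = 0"
    and q: "\<And>n. 0 \<le> q n" "q sums 1" "q 0 = 0"
    and \<beta>: "0 \<le> \<beta>" "\<beta> < 1"
    and G: "\<And>n. 1 \<le> n \<Longrightarrow> ((\<lambda>s. s powr (\<beta> - 1)) has_integral G n) {1..real n}"
    and less: "\<And>z. 0 < z \<Longrightarrow> z < 1 \<Longrightarrow> gf p z < gf q z"
    and finite: "mellin (- \<beta>) (\<lambda>t. exp (- t) - gf p (exp (- t))) < \<infinity>"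
  shows "summable (\<lambda>n. p n * G n)" "summable (\<lambda>n. q n * G n)" "(\<Sum>n. q n * G n) < (\<Sum>n. p n * G n)"
proof -
  define c where "c = Gamma (1 - \<beta>)"
  have c: "0 < c"
    unfolding c_def using \<beta> by (intro Gamma_real_pos) auto
  have G_nonneg: "0 \<le> G n" if "1 \<le> n" for n
    using that by (intro has_integral_nonneg[OF G[OF that]]) auto
  have nonneg: "0 \<le> r n * (c * G n)" if "\<And>n. 0 \<le> r n" "r 0 = 0" for r :: "nat \<Rightarrow> real" and n
    using that c G_nonneg[of n] by (cases "n = 0") auto
  have mellin_p: "mellin (- \<beta>) (\<lambda>t. exp (- t) - gf p (exp (- t))) = (\<Sum>n. ennreal (p n * (c * G n)))"
    and mellin_q: "mellin (- \<beta>) (\<lambda>t. exp (- t) - gf q (exp (- t))) = (\<Sum>n. ennreal (q n * (c * G n)))"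
    unfolding c_def using p q \<beta> G by (auto intro!: mellin_one_minus_gf_exp)
  have "mellin (- \<beta>) (\<lambda>t. exp (- t) - gf q (exp (- t))) < mellin (- \<beta>) (\<lambda>t. exp (- t) - gf p (exp (- t)))"
  proof (rule mellin_strict_mono[OF _ _ _ finite])
    fix t :: real assume "0 < t"
    then show "0 \<le> exp (- t) - gf q (exp (- t)) \<and> exp (- t) - gf q (exp (- t)) < exp (- t) - gf p (exp (- t))"
      using less[of "exp (- t)"] gf_le_id[OF q(1) sums_summable[OF q(2)] q(2,3), of "exp (- t)"] by auto
  qed auto
  then have sums_less: "(\<Sum>n. ennreal (q n * (c * G n))) < (\<Sum>n. ennreal (p n * (c * G n)))"
    unfolding mellin_p mellin_q .
  have summable_p: "summable (\<lambda>n. p n * (c * G n))"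
    using finite mellin_p by (intro summable_suminf_not_top nonneg p) auto
  have summable_q: "summable (\<lambda>n. q n * (c * G n))"
    using finite mellin_p sums_less by (intro summable_suminf_not_top nonneg q) auto
  have rescale: "(\<lambda>n. r n * (c * G n)) = (\<lambda>n. c * (r n * G n))" for r :: "nat \<Rightarrow> real"
    by (simp add: algebra_simps)
  show summable: "summable (\<lambda>n. p n * G n)" "summable (\<lambda>n. q n * G n)"
    using summable_p summable_q c by (simp_all add: rescale summable_cmult_iff)
  have "ennreal (c * (\<Sum>n. q n * G n)) < ennreal (c * (\<Sum>n. p n * G n))"
    using sums_less summable_p summable_q
    by (simp add: suminf_ennreal2 nonneg p q rescale suminf_mult[OF summable(1)] suminf_mult[OF summable(2)])
  then have "c * (\<Sum>n. q n * G n) < c * (\<Sum>n. p n * G n)"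
    by (metis ennreal_leI not_le)
  then show "(\<Sum>n. q n * G n) < (\<Sum>n. p n * G n)"
    using c by simp
qed

lemma has_integral_powr_Icc:
  fixes x :: real
  assumes "0 < \<alpha>" "1 \<le> x"
  shows "((\<lambda>s. s powr (\<alpha> - 1)) has_integral ((x powr \<alpha> - 1) / \<alpha>)) {1..x}"
proof -
  have "((\<lambda>s. s powr (\<alpha> - 1)) has_integral (x powr \<alpha> / \<alpha> - 1 powr \<alpha> / \<alpha>)) {1..x}"
  proof (rule fundamental_theorem_of_calculus[OF assms(2)])
    fix s assume "s \<in> {1..x}"
    then have "((\<lambda>s. s powr \<alpha> / \<alpha>) has_real_derivative s powr (\<alpha> - 1)) (at s)"
      using assms(1) by (auto intro!: derivative_eq_intros)
    then show "((\<lambda>s. s powr \<alpha> / \<alpha>) has_vector_derivative s powr (\<alpha> - 1)) (at s within {1..x})"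
      by (simp add: has_real_derivative_iff_has_vector_derivative has_vector_derivative_at_within)
  qed
  then show ?thesis
    by (simp add: diff_divide_distrib)
qed

lemma has_integral_inverse_Icc:
  fixes x :: real
  assumes "1 \<le> x"
  shows "((\<lambda>s. s powr (0 - 1)) has_integral ln x) {1..x}"
proof -
  have "((\<lambda>s. s powr (0 - 1)) has_integral (ln x - ln 1)) {1..x}"
  proof (rule fundamental_theorem_of_calculus[OF assms])
    fix s assume "s \<in> {1..x}"
    then have "(ln has_real_derivative s powr (0 - 1)) (at s)"
      by (auto intro!: derivative_eq_intros simp: powr_minus divide_inverse)
    then show "(ln has_vector_derivative s powr (0 - 1)) (at s within {1..x})"
      by (simp add: has_real_derivative_iff_has_vector_derivative has_vector_derivative_at_within)
  qed
  then show ?thesis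
    by simp
qed

lemma gw_mu_eq_one_plus:
  assumes "gw_size_prob \<xi> sums 1" "0 < \<alpha>"
    and summable: "summable (\<lambda>n. gw_size_prob \<xi> n * ((real n powr \<alpha> - 1) / \<alpha>))"
  shows "gw_mu \<xi> \<alpha> = 1 + \<alpha> * (\<Sum>n. gw_size_prob \<xi> n * ((real n powr \<alpha> - 1) / \<alpha>))"
proof -
  have "gw_size_prob \<xi> n * real n powr \<alpha> = gw_size_prob \<xi> n + \<alpha> * (gw_size_prob \<xi> n * ((real n powr \<alpha> - 1) / \<alpha>))" for n
    using assms(2) by (cases "n = 0") (auto simp: field_simps)
  then have "gw_mu \<xi> \<alpha> = (\<Sum>n. gw_size_prob \<xi> n + \<alpha> * (gw_size_prob \<xi> n * ((real n powr \<alpha> - 1) / \<alpha>)))"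
    unfolding gw_mu_def by presburger
  also have "\<dots> = (\<Sum>n. gw_size_prob \<xi> n) + (\<Sum>n. \<alpha> * (gw_size_prob \<xi> n * ((real n powr \<alpha> - 1) / \<alpha>)))"
    by (rule suminf_add[symmetric, OF sums_summable[OF assms(1)] summable_mult[OF summable]])
  also have "\<dots> = 1 + \<alpha> * (\<Sum>n. gw_size_prob \<xi> n * ((real n powr \<alpha> - 1) / \<alpha>))"
    using assms(1) suminf_mult[OF summable, of \<alpha>] by (simp add: sums_iff)
  finally show ?thesis .
qed

lemma gw_mu_greater_if_size_gf_less:
  assumes A: "size_gf_above_bin2 \<xi>A" and B: "size_gf_above_bin2 \<xi>B"
    and less: "size_gf_less \<xi>A \<xi>B" and \<alpha>: "0 < \<alpha>" "\<alpha> < 1/2"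
  shows "gw_mu \<xi>B \<alpha> < gw_mu \<xi>A \<alpha>"
proof -
  have \<beta>: "0 \<le> \<alpha>" "\<alpha> < 1"
    using \<alpha> by auto
  have G: "((\<lambda>s. s powr (\<alpha> - 1)) has_integral (real n powr \<alpha> - 1) / \<alpha>) {1..real n}" if "1 \<le> n" for n
    using \<alpha> that by (intro has_integral_powr_Icc) auto
  note compare = sum_weights_less_if_gf_less[
      OF gw_size_prob_nonneg size_gf_above_bin2_sums_1[OF A] gw_size_prob_0
         gw_size_prob_nonneg size_gf_above_bin2_sums_1[OF B] gw_size_prob_0 \<beta> G
         less[unfolded size_gf_less_def, rule_format] size_gf_above_bin2_mellin_finite[OF A \<beta>(1) \<alpha>(2)]]
  show ?thesis
    using compare \<alpha> A B by (simp add: gw_mu_eq_one_plus size_gf_above_bin2_sums_1)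
qed

lemma gw_mu_log_greater_if_size_gf_less:
  assumes A: "size_gf_above_bin2 \<xi>A" and B: "size_gf_above_bin2 \<xi>B" and less: "size_gf_less \<xi>A \<xi>B"
  shows "gw_mu_log \<xi>B < gw_mu_log \<xi>A"
proof -
  have G: "((\<lambda>s. s powr (0 - 1)) has_integral ln (real n)) {1..real n}" if "1 \<le> n" for n
    using that by (intro has_integral_inverse_Icc) auto
  show ?thesis
    unfolding gw_mu_log_def
    by (rule sum_weights_less_if_gf_less(3)[
        OF gw_size_prob_nonneg size_gf_above_bin2_sums_1[OF A] gw_size_prob_0
           gw_size_prob_nonneg size_gf_above_bin2_sums_1[OF B] gw_size_prob_0 _ _ G
           less[unfolded size_gf_less_def, rule_format] size_gf_above_bin2_mellin_finite[OF A]])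
       auto
qed

lemmas size_gf_less_laws = size_gf_less_xi1 size_gf_less_xi5 size_gf_less_xi1_xi2
  size_gf_less_xi2_xi3 size_gf_less_xi3_xi4 size_gf_less_xi4_xi5_3

lemmas size_gf_above_bin2_laws = size_gf_above_bin2_xi1 size_gf_above_bin2_xi2
  size_gf_above_bin2_xi3 size_gf_above_bin2_xi4 size_gf_above_bin2_xi5

theorem theorem6p12:
  shows
  "(\<forall>\<alpha>::real. \<alpha> < 0 \<longrightarrow>
      (\<forall>m m'. 2 \<le> m \<and> m < m' \<longrightarrow> gw_mu (xi1 m) \<alpha> < gw_mu (xi1 m') \<alpha>) \<and>
      (\<forall>m m'. 3 \<le> m \<and> m < m' \<longrightarrow> gw_mu (xi5 m) \<alpha> < gw_mu (xi5 m') \<alpha>) \<and>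
      (\<forall>m. 2 \<le> m \<longrightarrow> gw_mu (xi1 m) \<alpha> < gw_mu xi2 \<alpha>) \<and>
      gw_mu xi2 \<alpha> < gw_mu xi3 \<alpha> \<and>
      gw_mu xi3 \<alpha> < gw_mu xi4 \<alpha> \<and>
      gw_mu xi4 \<alpha> < gw_mu (xi5 3) \<alpha>)
   \<and>
   (\<forall>\<alpha>::real. 0 < \<alpha> \<and> \<alpha> < 1/2 \<longrightarrow>
      (\<forall>m m'. 2 \<le> m \<and> m < m' \<longrightarrow> gw_mu (xi1 m) \<alpha> > gw_mu (xi1 m') \<alpha>) \<and>
      (\<forall>m m'. 3 \<le> m \<and> m < m' \<longrightarrow> gw_mu (xi5 m) \<alpha> > gw_mu (xi5 m') \<alpha>) \<and>
      (\<forall>m. 2 \<le> m \<longrightarrow> gw_mu (xi1 m) \<alpha> > gw_mu xi2 \<alpha>) \<and>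
      gw_mu xi2 \<alpha> > gw_mu xi3 \<alpha> \<and>
      gw_mu xi3 \<alpha> > gw_mu xi4 \<alpha> \<and>
      gw_mu xi4 \<alpha> > gw_mu (xi5 3) \<alpha>)
   \<and>
   ((\<forall>m m'. 2 \<le> m \<and> m < m' \<longrightarrow> gw_mu_log (xi1 m) > gw_mu_log (xi1 m')) \<and>
    (\<forall>m m'. 3 \<le> m \<and> m < m' \<longrightarrow> gw_mu_log (xi5 m) > gw_mu_log (xi5 m')) \<and>
    (\<forall>m. 2 \<le> m \<longrightarrow> gw_mu_log (xi1 m) > gw_mu_log xi2) \<and>
    gw_mu_log xi2 > gw_mu_log xi3 \<and>
    gw_mu_log xi3 > gw_mu_log xi4 \<and>
    gw_mu_log xi4 > gw_mu_log (xi5 3))"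
  by (rule conjI[OF _ conjI],
      (auto intro!: gw_mu_less_if_size_gf_less size_gf_less_laws)[1],
      (auto intro!: gw_mu_greater_if_size_gf_less size_gf_less_laws size_gf_above_bin2_laws)[1],
      auto intro!: gw_mu_log_greater_if_size_gf_less size_gf_less_laws size_gf_above_bin2_laws)

end
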